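(* Let $X$ be a compact metrizable abelian group, $T$ a continuous automorphism of $X$, and $Y\le X$ a closed subgroup with $TY=Y$ such that $T|_Y$ is ergodic with respect to the Haar measure of $Y$. Suppose that for some $x\in X$ and $n\in\mathbb{N}$ the coset $x+Y$ satisfies $T^n(x+Y)=x+Y$. Then there exists $x'\in x+Y$ with $T^nx'=x'$. *)

theory Defs
  imports "HOL-Analysis.Analysis" "HOL-Probability.Probability"
begin

definition closed_subgroup :: "'a::topological_ab_group_add set \<Rightarrow> bool" where
  "closed_subgroup Y \<longleftrightarrow> closed Y \<and> 0 \<in> Y \<and>
     (\<forall>a\<in>Y. \<forall>b\<in>Y. a + b \<in> Y) \<and> (\<forall>a\<in>Y. - a \<in> Y)"

definition cont_automorphism :: "('a::topological_ab_group_add \<Rightarrow> 'a) \<Rightarrow> bool" where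
  "cont_automorphism T \<longleftrightarrow> continuous_on UNIV T \<and> bij T \<and>
     (\<forall>a b. T (a + b) = T a + T b)"

definition haar_measure_on :: "'a::topological_ab_group_add set \<Rightarrow> 'a measure \<Rightarrow> bool" where
  "haar_measure_on Y \<mu> \<longleftrightarrow> sets \<mu> = sets (restrict_space borel Y) \<and> prob_space \<mu> \<and>
     (\<forall>y\<in>Y. \<forall>A\<in>sets \<mu>. (\<lambda>z. y + z) ` A \<in> sets \<mu> \<and>
        emeasure \<mu> ((\<lambda>z. y + z) ` A) = emeasure \<mu> A)"

definition ergodic_wrt :: "('a \<Rightarrow> 'a) \<Rightarrow> 'a measure \<Rightarrow> bool" where
  "ergodic_wrt T \<mu> \<longleftrightarrow> T \<in> measurable \<mu> \<mu> \<and> distr \<mu> \<mu> T = \<mu> \<and>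
     (\<forall>A\<in>sets \<mu>. T -` A \<inter> space \<mu> = A \<longrightarrow> emeasure \<mu> A = 0 \<or> emeasure \<mu> A = 1)"

end

theory Submission
  imports Defs
begin

text \<open>Write \<open>S = T\<^sup>n\<close>. Since \<open>T\<^sup>n(x + Y) = x + Y\<close>, we have \<open>S x = x + d\<close> for some
  \<open>d \<in> Y\<close>, and \<open>x + y\<close> is a fixed point as soon as \<open>S y - y = -d\<close>; so it suffices that
  \<open>y \<mapsto> S y - y\<close> maps \<open>Y\<close> onto \<open>Y\<close>. Its image \<open>Z\<close> is a compact \<open>T\<close>-invariant subgroup
  of \<open>Y\<close>. If some \<open>y\<^sub>0 \<in> Y\<close> missed \<open>Z\<close>, then so would its first \<open>n\<close> iterates, and a small
  neighbourhood \<open>U\<close> of \<open>0\<close> separates \<open>Z + U\<close> from the translates \<open>T\<^sup>k y\<^sub>0 + U\<close>.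
  The union of the preimages \<open>T\<^sup>-\<^sup>k(Z + U)\<close>, \<open>k < n\<close>, is then a \<open>T\<close>-invariant open set
  containing \<open>0\<close> which misses an open neighbourhood of \<open>y\<^sub>0\<close>. As Haar measure charges
  every nonempty open subset of \<open>Y\<close>, this contradicts ergodicity.\<close>

lemma cont_automorphism_additive:
  "cont_automorphism T \<Longrightarrow> Modules.additive T"
  unfolding cont_automorphism_def by unfold_locales blast

lemma continuous_on_funpow:
  fixes f :: "'a::topological_space \<Rightarrow> 'a"
  assumes "continuous_on UNIV f"
  shows "continuous_on UNIV (f ^^ k)"
proof (induction k)
  case (Suc k)
  then show ?case
    using continuous_on_compose[OF assms continuous_on_subset[OF Suc.IH subset_UNIV]]
    by (simp only: funpow_Suc_right)
qed (simp add: id_def)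

lemma additive_funpow:
  fixes f :: "'a::ab_group_add \<Rightarrow> 'a"
  assumes "Modules.additive f"
  shows "Modules.additive (f ^^ k)"
proof -
  interpret f: Modules.additive f by fact
  have "(f ^^ k) (a + b) = (f ^^ k) a + (f ^^ k) b" for a b
    by (induction k) (simp_all add: f.add)
  then show ?thesis
    by (rule Modules.additive.intro)
qed

lemma funpow_image_subset:
  assumes "f ` A \<subseteq> A"
  shows "(f ^^ k) ` A \<subseteq> A"
  using assms by (induction k) auto

lemma closed_subgroupD:
  assumes "closed_subgroup Y"
  shows "closed Y" "0 \<in> Y" "\<And>a b. a \<in> Y \<Longrightarrow> b \<in> Y \<Longrightarrow> a + b \<in> Y"
    "\<And>a. a \<in> Y \<Longrightarrow> - a \<in> Y" "\<And>a b. a \<in> Y \<Longrightarrow> b \<in> Y \<Longrightarrow> a - b \<in> Y"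
  using assms unfolding closed_subgroup_def diff_conv_add_uminus by blast+

lemma funpow_notin_invariant_subgroup:
  assumes "closed_subgroup Z" "f ` Z \<subseteq> Z" "(f ^^ n) y - y \<in> Z" "y \<notin> Z" "k \<le> n"
  shows "(f ^^ k) y \<notin> Z"
proof
  assume "(f ^^ k) y \<in> Z"
  then have "(f ^^ (n - k)) ((f ^^ k) y) \<in> Z"
    using funpow_image_subset[OF assms(2)] by blast
  moreover have "n = (n - k) + k"
    using assms(5) by simp
  then have "(f ^^ (n - k)) ((f ^^ k) y) = (f ^^ n) y"
    by (metis funpow_add comp_apply)
  ultimately have "(f ^^ n) y \<in> Z"
    by simp
  then have "(f ^^ n) y - ((f ^^ n) y - y) \<in> Z"
    using closed_subgroupD(5)[OF assms(1)] assms(3) by blast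
  with assms(4) show False
    by simp
qed

lemma closed_subgroup_additive_image:
  fixes f :: "'a::topological_ab_group_add \<Rightarrow> 'b::{topological_ab_group_add, t2_space}"
  assumes "Modules.additive f" "continuous_on Y f" "compact Y" "closed_subgroup Y"
  shows "closed_subgroup (f ` Y)"
proof -
  interpret f: Modules.additive f by fact
  note Y = closed_subgroupD[OF assms(4)]
  have "closed (f ` Y)"
    using assms by (intro compact_imp_closed compact_continuous_image)
  moreover have "0 \<in> f ` Y"
    using Y(2) f.zero by (auto intro!: image_eqI[of 0 f 0])
  moreover have "f a + f b \<in> f ` Y" if "a \<in> Y" "b \<in> Y" for a b
    unfolding f.add[symmetric] using that Y(3) by blast
  moreover have "- f a \<in> f ` Y" if "a \<in> Y" for a
    unfolding f.minus[symmetric] using that Y(4) by blast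
  ultimately show ?thesis
    unfolding closed_subgroup_def by blast
qed

lemma open_zero_nhd_diff_notin:
  fixes P :: "'a::topological_ab_group_add set"
  assumes "closed P" "0 \<notin> P"
  obtains U where "open U" "0 \<in> U" "\<And>a b. a \<in> U \<Longrightarrow> b \<in> U \<Longrightarrow> a - b \<notin> P"
proof -
  let ?G = "(\<lambda>p. fst p - snd p) -` (- P)"
  have "open (- P)"
    using assms(1) by (rule open_Compl)
  then have "open ?G"
    by (rule open_vimage) (intro continuous_intros)
  moreover have "(0, 0) \<in> ?G"
    using assms(2) by simp
  ultimately obtain A B where AB: "open A" "open B" "(0, 0) \<in> A \<times> B" "A \<times> B \<subseteq> ?G"
    by (rule open_prod_elim)
  show ?thesis
  proof (rule that)
    show "open (A \<inter> B)"
      using AB(1,2) by (rule open_Int)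
    show "0 \<in> A \<inter> B"
      using AB(3) by simp
    show "a - b \<notin> P" if "a \<in> A \<inter> B" "b \<in> A \<inter> B" for a b
    proof -
      have "(a, b) \<in> A \<times> B"
        using that by simp
      then show ?thesis
        using AB(4) by auto
    qed
  qed
qed

lemma closed_subgroup_separating_nhd:
  fixes Z :: "'a::topological_ab_group_add set"
  assumes "closed_subgroup Z" "finite K" "K \<inter> Z = {}"
  obtains U where "open U" "0 \<in> U"
    "\<And>p z a. p \<in> K \<Longrightarrow> z \<in> Z \<Longrightarrow> a - z \<in> U \<Longrightarrow> a - p \<in> U \<Longrightarrow> False"
proof -
  define P where "P = (\<Union>p\<in>K. (\<lambda>a. p - a) -` Z)"
  have "closed P"
    unfolding P_def using assms(2) closed_subgroupD(1)[OF assms(1)]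
    by (intro closed_UN ballI continuous_closed_vimage continuous_intros)
  moreover have "0 \<notin> P"
    using assms(3) unfolding P_def by auto
  ultimately obtain U where U: "open U" "0 \<in> U" "\<And>a b. a \<in> U \<Longrightarrow> b \<in> U \<Longrightarrow> a - b \<notin> P"
    using open_zero_nhd_diff_notin by blast
  show ?thesis
  proof (rule that[OF U(1,2)])
    fix p z a assume pz: "p \<in> K" "z \<in> Z" and a: "a - z \<in> U" "a - p \<in> U"
    have "(a - z) - (a - p) = p - z"
      by (simp add: algebra_simps)
    moreover have "p - z \<in> P"
      using pz unfolding P_def by (auto intro!: bexI[of _ p])
    ultimately show False
      using U(3)[OF a] by simp
  qed
qed

lemma haar_measure_on_space:
  "haar_measure_on Y \<mu> \<Longrightarrow> space \<mu> = Y"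
  unfolding haar_measure_on_def by (auto dest!: sets_eq_imp_space_eq simp: space_restrict_space)

lemma haar_measure_on_open_sets:
  assumes "haar_measure_on Y \<mu>" "closed Y" "open V"
  shows "Y \<inter> V \<in> sets \<mu>"
proof -
  have "Y \<inter> space borel \<in> sets borel"
    using assms(2) by simp
  then show ?thesis
    using assms unfolding haar_measure_on_def
    by (auto simp: sets_restrict_space_iff)
qed

lemma closed_subgroup_Int_translate:
  assumes "closed_subgroup Y" "c \<in> Y"
  shows "Y \<inter> (\<lambda>a. a - c) -` V = (\<lambda>z. c + z) ` (Y \<inter> V)"
proof (intro set_eqI iffI)
  fix a assume "a \<in> Y \<inter> (\<lambda>a. a - c) -` V"
  then have "a - c \<in> Y \<inter> V"
    using closed_subgroupD(5)[OF assms(1) _ assms(2)] by simp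
  moreover have "a = c + (a - c)"
    by simp
  ultimately show "a \<in> (\<lambda>z. c + z) ` (Y \<inter> V)"
    by blast
next
  fix a assume "a \<in> (\<lambda>z. c + z) ` (Y \<inter> V)"
  then show "a \<in> Y \<inter> (\<lambda>a. a - c) -` V"
    using closed_subgroupD(3)[OF assms(1) assms(2)] by auto
qed

text \<open>Finitely many translates of a nonempty relatively open set cover the compact group.\<close>

lemma haar_measure_on_open_pos:
  fixes Y :: "'a::topological_ab_group_add set"
  assumes "compact Y" "closed_subgroup Y" "haar_measure_on Y \<mu>" "open V" "Y \<inter> V \<noteq> {}"
  shows "emeasure \<mu> (Y \<inter> V) > 0"
proof -
  note Y = closed_subgroupD[OF assms(2)]
  have meas: "Y \<inter> W \<in> sets \<mu>" if "open W" for W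
    using haar_measure_on_open_sets[OF assms(3) Y(1) that] .
  have trans_inv: "emeasure \<mu> ((\<lambda>z. c + z) ` A) = emeasure \<mu> A" if "c \<in> Y" "A \<in> sets \<mu>" for c A
    using assms(3) that unfolding haar_measure_on_def by blast
  obtain u where u: "u \<in> Y" "u \<in> V"
    using assms(5) by blast
  define shift where "shift y = (\<lambda>a. a - (y - u)) -` V" for y
  have open_shift: "open (shift y)" for y
    unfolding shift_def by (intro open_vimage assms(4) continuous_intros)
  have "y \<in> shift y" for y
    using u(2) by (simp add: shift_def)
  then have cover: "Y \<subseteq> \<Union>(shift ` Y)"
    by blast
  obtain F where F: "F \<subseteq> Y" "finite F" "Y \<subseteq> \<Union>(shift ` F)"
    using compactE_image[OF assms(1) open_shift cover] by blast
  have "1 = emeasure \<mu> Y"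
    using assms(3) prob_space.emeasure_space_1 haar_measure_on_space[OF assms(3)]
    unfolding haar_measure_on_def by fastforce
  also have "Y = (\<Union>y\<in>F. Y \<inter> shift y)"
    using F(3) by blast
  also have "emeasure \<mu> \<dots> \<le> (\<Sum>y\<in>F. emeasure \<mu> (Y \<inter> shift y))"
    using meas open_shift by (intro emeasure_subadditive_finite F(2)) auto
  also have "\<dots> = (\<Sum>y\<in>F. emeasure \<mu> (Y \<inter> V))"
  proof (rule sum.cong[OF refl])
    fix y assume "y \<in> F"
    then have "y \<in> Y" "y - u \<in> Y"
      using F(1) Y(5) u(1) by auto
    then show "emeasure \<mu> (Y \<inter> shift y) = emeasure \<mu> (Y \<inter> V)"
      using closed_subgroup_Int_translate[OF assms(2)] trans_inv meas[OF assms(4)]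
      by (simp add: shift_def)
  qed
  finally have "1 \<le> of_nat (card F) * emeasure \<mu> (Y \<inter> V)"
    by simp
  then show ?thesis
    by (cases "emeasure \<mu> (Y \<inter> V) = 0") (simp_all add: zero_less_iff_neq_zero)
qed

lemma ergodic_invariant_open_meets_open:
  fixes Y :: "'a::topological_ab_group_add set"
  assumes "compact Y" "closed_subgroup Y" "haar_measure_on Y \<mu>" "ergodic_wrt T \<mu>"
    and "open V" "T -` (Y \<inter> V) \<inter> Y = Y \<inter> V" "Y \<inter> V \<noteq> {}"
    and "open W" "Y \<inter> W \<noteq> {}"
  shows "V \<inter> W \<inter> Y \<noteq> {}"
proof
  assume disjoint: "V \<inter> W \<inter> Y = {}"
  interpret prob_space \<mu>
    using assms(3) unfolding haar_measure_on_def by blast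
  note Y = closed_subgroupD[OF assms(2)]
  have VW: "Y \<inter> V \<in> sets \<mu>" "Y \<inter> W \<in> sets \<mu>"
    using haar_measure_on_open_sets[OF assms(3) Y(1)] assms(5,8) by auto
  have pos: "emeasure \<mu> (Y \<inter> V) > 0" "emeasure \<mu> (Y \<inter> W) > 0"
    using haar_measure_on_open_pos[OF assms(1-3)] assms(5,7,8,9) by auto
  have "emeasure \<mu> (Y \<inter> V) = 0 \<or> emeasure \<mu> (Y \<inter> V) = 1"
    using assms(4,6) VW(1) unfolding ergodic_wrt_def haar_measure_on_space[OF assms(3)] by blast
  then have "emeasure \<mu> (Y \<inter> V) = 1"
    using pos(1) by auto
  moreover have "emeasure \<mu> (Y \<inter> V) + emeasure \<mu> (Y \<inter> W) = emeasure \<mu> ((Y \<inter> V) \<union> (Y \<inter> W))"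
    using VW disjoint by (intro plus_emeasure) auto
  ultimately have "1 + emeasure \<mu> (Y \<inter> W) = emeasure \<mu> ((Y \<inter> V) \<union> (Y \<inter> W))"
    by simp
  also have "\<dots> \<le> 1"
    by (rule emeasure_le_1)
  finally show False
    using pos(2) by (simp add: ennreal_add_left_cancel_le[of 1 _ 0, simplified])
qed

lemma funpow_orbit_union_invariant:
  assumes "0 < n" "f ` Y \<subseteq> Y" "\<And>y. y \<in> Y \<Longrightarrow> (f ^^ n) y \<in> A \<longleftrightarrow> y \<in> A"
  shows "f -` (Y \<inter> (\<Union>k<n. (f ^^ k) -` A)) \<inter> Y = Y \<inter> (\<Union>k<n. (f ^^ k) -` A)"
proof -
  have "(\<exists>k<n. (f ^^ Suc k) y \<in> A) \<longleftrightarrow> (\<exists>k<n. (f ^^ k) y \<in> A)" if "y \<in> Y" for y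
  proof
    assume "\<exists>k<n. (f ^^ Suc k) y \<in> A"
    then obtain k where k: "k < n" "(f ^^ Suc k) y \<in> A"
      by blast
    show "\<exists>k<n. (f ^^ k) y \<in> A"
    proof (cases "Suc k = n")
      case True
      then show ?thesis
        using k(2) assms(1,3) that by auto
    next
      case False
      then show ?thesis
        using k by (intro exI[of _ "Suc k"]) (auto simp del: funpow.simps)
    qed
  next
    assume "\<exists>k<n. (f ^^ k) y \<in> A"
    then obtain k where k: "k < n" "(f ^^ k) y \<in> A"
      by blast
    show "\<exists>k<n. (f ^^ Suc k) y \<in> A"
    proof (cases k)
      case 0
      then show ?thesis
        using k assms(1,3) that by (intro exI[of _ "n - 1"]) auto
    next
      case (Suc j)
      then show ?thesis
        using k by (intro exI[of _ j]) auto
    qed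
  qed
  then have "(\<exists>k<n. (f ^^ k) (f y) \<in> A) \<longleftrightarrow> (\<exists>k<n. (f ^^ k) y \<in> A)" if "y \<in> Y" for y
    using that by (simp only: funpow_Suc_right comp_apply)
  then show ?thesis
    using assms(2) by blast
qed

lemma translate_subgroup_nhd_add_iff:
  assumes "closed_subgroup Z" "d \<in> Z"
  shows "a + d \<in> (\<Union>z\<in>Z. (\<lambda>b. b - z) -` U) \<longleftrightarrow> a \<in> (\<Union>z\<in>Z. (\<lambda>b. b - z) -` U)"
proof
  assume "a + d \<in> (\<Union>z\<in>Z. (\<lambda>b. b - z) -` U)"
  then obtain z where z: "z \<in> Z" "a + d - z \<in> U"
    by blast
  show "a \<in> (\<Union>z\<in>Z. (\<lambda>b. b - z) -` U)"
  proof (rule UN_I)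
    show "z - d \<in> Z"
      using closed_subgroupD(5)[OF assms(1) z(1) assms(2)] .
    show "a \<in> (\<lambda>b. b - (z - d)) -` U"
      using z(2) by (simp add: diff_diff_eq2)
  qed
next
  assume "a \<in> (\<Union>z\<in>Z. (\<lambda>b. b - z) -` U)"
  then obtain z where z: "z \<in> Z" "a - z \<in> U"
    by blast
  show "a + d \<in> (\<Union>z\<in>Z. (\<lambda>b. b - z) -` U)"
  proof (rule UN_I)
    show "z + d \<in> Z"
      using closed_subgroupD(3)[OF assms(1) z(1) assms(2)] .
    show "a + d \<in> (\<lambda>b. b - (z + d)) -` U"
      using z(2) by simp
  qed
qed

lemma ergodic_periodic_mod_subgroup_subset:
  fixes T :: "'a::topological_ab_group_add \<Rightarrow> 'a"
  assumes "compact Y" "closed_subgroup Y" "haar_measure_on Y \<mu>" "ergodic_wrt T \<mu>"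
    and "continuous_on UNIV T" "T ` Y \<subseteq> Y" "0 < n"
    and "closed_subgroup Z" "T ` Z \<subseteq> Z" "\<And>y. y \<in> Y \<Longrightarrow> (T ^^ n) y - y \<in> Z"
  shows "Y \<subseteq> Z"
proof
  fix y\<^sub>0 assume y\<^sub>0: "y\<^sub>0 \<in> Y"
  show "y\<^sub>0 \<in> Z"
  proof (rule ccontr)
    assume "y\<^sub>0 \<notin> Z"
    then have "(T ^^ k) y\<^sub>0 \<notin> Z" if "k < n" for k
      using funpow_notin_invariant_subgroup[OF assms(8,9) assms(10)[OF y\<^sub>0]] that by simp
    then have "(\<lambda>k. (T ^^ k) y\<^sub>0) ` {..<n} \<inter> Z = {}"
      by blast
    then obtain U where U: "open U" "0 \<in> U"
      "\<And>p z a. p \<in> (\<lambda>k. (T ^^ k) y\<^sub>0) ` {..<n} \<Longrightarrow> z \<in> Z \<Longrightarrow> a - z \<in> U \<Longrightarrow> a - p \<in> U \<Longrightarrow> False"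
      by (rule closed_subgroup_separating_nhd[OF assms(8) finite_imageI[OF finite_lessThan]]) blast
    define ZU where "ZU = (\<Union>z\<in>Z. (\<lambda>a. a - z) -` U)"
    define V where "V = (\<Union>k<n. (T ^^ k) -` ZU)"
    define W where "W = (\<Inter>k<n. (\<lambda>y. (T ^^ k) y - (T ^^ k) y\<^sub>0) -` U)"
    have cont: "continuous_on UNIV (T ^^ k)" for k
      using continuous_on_funpow[OF assms(5)] .
    have "open ZU"
      unfolding ZU_def using U(1) by (intro open_UN ballI open_vimage continuous_intros)
    then have "open V"
      unfolding V_def by (intro open_UN ballI open_vimage cont)
    have "open W"
      unfolding W_def using U(1) by (intro open_INT finite_lessThan ballI open_vimage continuous_intros cont)
    have "(T ^^ n) y \<in> ZU \<longleftrightarrow> y \<in> ZU" if "y \<in> Y" for y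
      using translate_subgroup_nhd_add_iff[OF assms(8) assms(10)[OF that], where a = y and U = U]
      unfolding ZU_def by simp
    then have "T -` (Y \<inter> V) \<inter> Y = Y \<inter> V"
      unfolding V_def by (rule funpow_orbit_union_invariant[OF assms(7,6)])
    moreover have "0 \<in> ZU"
      unfolding ZU_def using closed_subgroupD(2)[OF assms(8)] U(2) by (intro UN_I[of 0]) simp_all
    then have "0 \<in> Y \<inter> V"
      unfolding V_def using closed_subgroupD(2)[OF assms(2)] assms(7) by (auto intro!: bexI[of _ 0])
    then have "Y \<inter> V \<noteq> {}"
      by blast
    moreover have "y\<^sub>0 \<in> Y \<inter> W"
      unfolding W_def using y\<^sub>0 U(2) by simp
    then have "Y \<inter> W \<noteq> {}"
      by blast
    moreover have "V \<inter> W \<inter> Y = {}"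
    proof (rule ccontr)
      assume "V \<inter> W \<inter> Y \<noteq> {}"
      then obtain y k z where "k < n" "z \<in> Z" "(T ^^ k) y - z \<in> U" "(T ^^ k) y - (T ^^ k) y\<^sub>0 \<in> U"
        unfolding V_def W_def ZU_def by blast
      then show False
        using U(3)[of "(T ^^ k) y\<^sub>0" z "(T ^^ k) y"] by blast
    qed
    ultimately show False
      using ergodic_invariant_open_meets_open[OF assms(1-4) \<open>open V\<close> _ _ \<open>open W\<close>] by blast
  qed
qed

lemma ergodic_funpow_minus_id_image:
  fixes T :: "'a::{topological_ab_group_add, t2_space} \<Rightarrow> 'a"
  assumes "compact Y" "closed_subgroup Y" "haar_measure_on Y \<mu>" "ergodic_wrt T \<mu>"
    and "Modules.additive T" "continuous_on UNIV T" "T ` Y \<subseteq> Y" "0 < n"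
  shows "(\<lambda>y. (T ^^ n) y - y) ` Y = Y"
proof -
  let ?Z = "(\<lambda>y. (T ^^ n) y - y) ` Y"
  interpret T: Modules.additive T by fact
  interpret Tn: Modules.additive "T ^^ n"
    using additive_funpow[OF assms(5)] .
  have "Modules.additive (\<lambda>y. (T ^^ n) y - y)"
    by unfold_locales (simp add: Tn.add algebra_simps)
  moreover have "continuous_on Y (\<lambda>y. (T ^^ n) y - y)"
    by (intro continuous_intros continuous_on_subset[OF continuous_on_funpow[OF assms(6)]]) auto
  ultimately have "closed_subgroup ?Z"
    by (rule closed_subgroup_additive_image[OF _ _ assms(1,2)])
  moreover have "T ((T ^^ n) y - y) \<in> ?Z" if "y \<in> Y" for y
  proof -
    have "T ((T ^^ n) y - y) = (T ^^ n) (T y) - T y"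
      by (simp add: T.diff funpow_swap1)
    then show ?thesis
      using assms(7) that by auto
  qed
  then have "T ` ?Z \<subseteq> ?Z"
    by auto
  ultimately have "Y \<subseteq> ?Z"
    by (rule ergodic_periodic_mod_subgroup_subset[OF assms(1-4,6-8)]) auto
  moreover have "?Z \<subseteq> Y"
    using funpow_image_subset[OF assms(7)] closed_subgroupD(5)[OF assms(2)] by blast
  ultimately show ?thesis
    by blast
qed

lemma additive_fixed_point_in_coset:
  fixes S :: "'a::topological_ab_group_add \<Rightarrow> 'a"
  assumes "Modules.additive S" "closed_subgroup Y" "(\<lambda>y. S y - y) ` Y = Y"
    and "S ` (\<lambda>y. x + y) ` Y = (\<lambda>y. x + y) ` Y"
  shows "\<exists>x'\<in>(\<lambda>y. x + y) ` Y. S x' = x'"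
proof -
  interpret S: Modules.additive S by fact
  note Y = closed_subgroupD[OF assms(2)]
  have "S (x + 0) \<in> S ` (\<lambda>y. x + y) ` Y"
    using Y(2) by (intro imageI)
  then obtain d where d: "d \<in> Y" "S x = x + d"
    unfolding assms(4) by auto
  have "- d \<in> (\<lambda>y. S y - y) ` Y"
    using assms(3) Y(4)[OF d(1)] by simp
  then obtain y where y: "y \<in> Y" "- d = S y - y"
    by (rule imageE)
  have "S (x + y) = S x + (y + (S y - y))"
    by (simp add: S.add)
  also have "\<dots> = x + y"
    using d(2) y(2)[symmetric] by (simp add: algebra_simps)
  finally show ?thesis
    using y(1) by blast
qed

theorem lemma4p8:
  fixes T :: "'a::{topological_ab_group_add, metric_space} \<Rightarrow> 'a"
    and Y :: "'a set" and x :: 'a and n :: nat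
  assumes "compact (UNIV :: 'a set)"
    and "cont_automorphism T"
    and "closed_subgroup Y"
    and "T ` Y = Y"
    and "\<exists>\<mu>. haar_measure_on Y \<mu> \<and> ergodic_wrt T \<mu>"
    and "(T ^^ n) ` ((\<lambda>y. x + y) ` Y) = (\<lambda>y. x + y) ` Y"
  shows "\<exists>x'\<in>(\<lambda>y. x + y) ` Y. (T ^^ n) x' = x'"
proof (cases "n = 0")
  case True
  have "x + 0 \<in> (\<lambda>y. x + y) ` Y"
    using closed_subgroupD(2)[OF assms(3)] by (rule imageI)
  then show ?thesis
    using True by auto
next
  case False
  have additive: "Modules.additive T" and cont: "continuous_on UNIV T"
    using assms(2) cont_automorphism_additive unfolding cont_automorphism_def by blast+
  obtain \<mu> where \<mu>: "haar_measure_on Y \<mu>" "ergodic_wrt T \<mu>"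
    using assms(5) by blast
  have "compact Y"
    using compact_Int_closed[OF assms(1) closed_subgroupD(1)[OF assms(3)]] by simp
  moreover have "T ` Y \<subseteq> Y" "0 < n"
    using assms(4) False by simp_all
  ultimately have "(\<lambda>y. (T ^^ n) y - y) ` Y = Y"
    using ergodic_funpow_minus_id_image[OF _ assms(3) \<mu> additive cont] by blast
  then show ?thesis
    using additive_fixed_point_in_coset[OF additive_funpow[OF additive] assms(3) _ assms(6)] by blast
qed

end
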